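(* Let $\ell^{\infty}$ be the space of bounded real sequences $x=(x_i)_{i\in\mathbb{N}}$, and for $p\in(0,\infty)$, $n\in\mathbb{N}$ let $$\|x\|_{\infty,p,n}:=\sup_{j\in\mathbb{N}}\Big(\frac{1}{n}\sum_{i=j}^{j+(n-1)}|x_i|^{p}\Big)^{1/p}.$$ Let $d\in\mathbb{N}$, $\alpha_1,\dots,\alpha_d\in\mathbb{N}$ and $n=\sum_{l=1}^{d}\alpha_l$. Then for all $p\in[1,\infty)$ and all $x\in\ell^{\infty}$, $$\|x\|_{\infty,p,n}^{p}\leq \sum_{l=1}^{d}\frac{\alpha_l}{n}\|x\|_{\infty,p,\alpha_l}^{p}.$$
   Context: $\mathbb{N}=\{1,2,3,\dots\}$. *)

theory Defs
  imports "HOL-Analysis.Analysis"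
begin

text \<open>Sequences are indexed by the positive naturals 1, 2, 3, ...; a sequence is modelled
as a function nat to real whose value at 0 is ignored.\<close>

definition bounded_seq :: "(nat \<Rightarrow> real) \<Rightarrow> bool" where
  "bounded_seq x \<longleftrightarrow> (\<exists>M. \<forall>i\<ge>1. \<bar>x i\<bar> \<le> M)"

definition norm_inf_p_n :: "real \<Rightarrow> nat \<Rightarrow> (nat \<Rightarrow> real) \<Rightarrow> real" where
  "norm_inf_p_n p n x =
     (SUP j\<in>{1..}. ((1 / real n) * (\<Sum>i = j..j + (n - 1). \<bar>x i\<bar> powr p)) powr (1 / p))"

end

theory Submission
  imports Defs
begin

text \<open>A window of length \<open>n = \<alpha>\<^sub>1 + \<dots> + \<alpha>\<^sub>d\<close> is the concatenation of \<open>d\<close> consecutive windows of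
  lengths \<open>\<alpha>\<^sub>l\<close>, so its \<open>p\<close>-th power mean is the \<open>\<alpha>\<^sub>l/n\<close>-weighted average of their power means.
  Each of those is bounded by the corresponding \<open>\<parallel>x\<parallel>\<^sub>\<infinity>\<^sub>,\<^sub>p\<^sub>,\<^sub>\<alpha>\<^sub>l\<^sup>p\<close>, and taking the supremum over
  the starting point of the long window gives the claim.\<close>

definition window_mean :: "real \<Rightarrow> nat \<Rightarrow> (nat \<Rightarrow> real) \<Rightarrow> nat \<Rightarrow> real" where
  "window_mean p m x j = (1 / real m) * (\<Sum>i = j..j + (m - 1). \<bar>x i\<bar> powr p)"

lemma window_mean_nonneg: "window_mean p m x j \<ge> 0"
  unfolding window_mean_def by (simp add: sum_nonneg)

lemma norm_inf_p_n_eq_SUP_window_mean: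
  "norm_inf_p_n p m x = (SUP j\<in>{1..}. window_mean p m x j powr (1 / p))"
  unfolding norm_inf_p_n_def window_mean_def ..

lemma sum_window_mean:
  assumes "m \<ge> 1"
  shows "(\<Sum>i = j..<j + m. \<bar>x i\<bar> powr p) = real m * window_mean p m x j"
proof -
  have "{j..<j + m} = {j..j + (m - 1)}" using assms by auto
  then show ?thesis unfolding window_mean_def using assms by simp
qed

lemma window_mean_le_bound:
  assumes "\<forall>i\<ge>1. \<bar>x i\<bar> \<le> M" "p > 0" "m \<ge> 1" "j \<ge> 1"
  shows "window_mean p m x j \<le> M powr p"
proof -
  have "(\<Sum>i = j..<j + m. \<bar>x i\<bar> powr p) \<le> (\<Sum>i = j..<j + m. M powr p)"
    using assms by (intro sum_mono powr_mono2) auto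
  then show ?thesis using assms(3) by (simp add: sum_window_mean)
qed

lemma bdd_above_window_mean_root:
  assumes "bounded_seq x" "p > 0" "m \<ge> 1"
  shows "bdd_above ((\<lambda>j. window_mean p m x j powr (1 / p)) ` {1..})"
proof -
  obtain M where M: "\<forall>i\<ge>1. \<bar>x i\<bar> \<le> M" using assms(1) unfolding bounded_seq_def by blast
  show ?thesis
    using window_mean_le_bound[OF M assms(2,3)] window_mean_nonneg assms(2)
    by (intro bdd_aboveI2[where M = "(M powr p) powr (1 / p)"] powr_mono2) auto
qed

lemma window_mean_le_norm_inf_p_n_powr:
  assumes "bounded_seq x" "p > 0" "m \<ge> 1" "j \<ge> 1"
  shows "window_mean p m x j \<le> norm_inf_p_n p m x powr p"
proof -
  have "window_mean p m x j powr (1 / p) \<le> norm_inf_p_n p m x"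
    unfolding norm_inf_p_n_eq_SUP_window_mean
    using assms by (intro cSUP_upper bdd_above_window_mean_root) auto
  then have "(window_mean p m x j powr (1 / p)) powr p \<le> norm_inf_p_n p m x powr p"
    using assms(2) by (intro powr_mono2) auto
  then show ?thesis using window_mean_nonneg assms(2) by (simp add: powr_powr)
qed

text \<open>No boundedness of \<open>x\<close> is needed here: a uniform bound on the window means makes the
  supremum finite.\<close>

lemma norm_inf_p_n_powr_le:
  assumes "p > 0" and le: "\<And>j. j \<ge> 1 \<Longrightarrow> window_mean p m x j \<le> R"
  shows "norm_inf_p_n p m x powr p \<le> R"
proof -
  have R0: "R \<ge> 0" using le[of 1] window_mean_nonneg[of p m x 1] by linarith
  have root_le: "window_mean p m x j powr (1 / p) \<le> R powr (1 / p)" if "j \<ge> 1" for j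
    using le[OF that] window_mean_nonneg assms(1) by (intro powr_mono2) auto
  have "window_mean p m x 1 powr (1 / p) \<le> norm_inf_p_n p m x"
    unfolding norm_inf_p_n_eq_SUP_window_mean
    using root_le by (intro cSUP_upper bdd_aboveI2[where M = "R powr (1 / p)"]) auto
  then have nonneg: "norm_inf_p_n p m x \<ge> 0" by (smt (verit) powr_ge_zero)
  have "norm_inf_p_n p m x \<le> R powr (1 / p)"
    unfolding norm_inf_p_n_eq_SUP_window_mean using root_le by (intro cSUP_least) auto
  then have "norm_inf_p_n p m x powr p \<le> (R powr (1 / p)) powr p"
    using nonneg assms(1) by (intro powr_mono2) auto
  also have "\<dots> = R" using R0 assms(1) by (simp add: powr_powr)
  finally show ?thesis .
qed

lemma sum_atLeastLessThan_concat_blocks: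
  fixes f :: "nat \<Rightarrow> 'a::comm_monoid_add" and \<alpha> :: "nat \<Rightarrow> nat"
  shows "(\<Sum>i = j..<j + (\<Sum>l = 1..d. \<alpha> l). f i)
     = (\<Sum>l = 1..d. \<Sum>i = j + (\<Sum>k = 1..<l. \<alpha> k)..<j + (\<Sum>k = 1..<l. \<alpha> k) + \<alpha> l. f i)"
proof (induction d)
  case 0
  then show ?case by simp
next
  case (Suc d)
  let ?n = "\<Sum>l = 1..d. \<alpha> l"
  have "(\<Sum>k = 1..<Suc d. \<alpha> k) = ?n"
    by (simp add: atLeastLessThanSuc_atLeastAtMost)
  moreover have "(\<Sum>i = j..<j + (\<Sum>l = 1..Suc d. \<alpha> l). f i)
      = (\<Sum>i = j..<j + ?n. f i) + (\<Sum>i = j + ?n..<j + ?n + \<alpha> (Suc d). f i)"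
    by (simp add: sum.atLeastLessThan_concat add.assoc)
  ultimately show ?case using Suc by simp
qed

lemma window_mean_concat_blocks:
  fixes \<alpha> :: "nat \<Rightarrow> nat"
  assumes "\<forall>l\<in>{1..d}. \<alpha> l \<ge> 1" "n = (\<Sum>l = 1..d. \<alpha> l)" "n \<ge> 1"
  shows "real n * window_mean p n x j
    = (\<Sum>l = 1..d. real (\<alpha> l) * window_mean p (\<alpha> l) x (j + (\<Sum>k = 1..<l. \<alpha> k)))"
proof -
  have "real n * window_mean p n x j = (\<Sum>i = j..<j + n. \<bar>x i\<bar> powr p)"
    using assms(3) by (simp add: sum_window_mean)
  also have "\<dots> = (\<Sum>l = 1..d. \<Sum>i = j + (\<Sum>k = 1..<l. \<alpha> k)..<j + (\<Sum>k = 1..<l. \<alpha> k) + \<alpha> l.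
                    \<bar>x i\<bar> powr p)"
    unfolding assms(2) by (rule sum_atLeastLessThan_concat_blocks)
  also have "\<dots> = (\<Sum>l = 1..d. real (\<alpha> l) * window_mean p (\<alpha> l) x (j + (\<Sum>k = 1..<l. \<alpha> k)))"
    using assms(1) by (intro sum.cong refl sum_window_mean) auto
  finally show ?thesis .
qed

theorem lemma1p2:
  fixes d :: nat and \<alpha> :: "nat \<Rightarrow> nat" and n :: nat and p :: real and x :: "nat \<Rightarrow> real"
  assumes "d \<ge> 1"
    and "\<forall>l\<in>{1..d}. \<alpha> l \<ge> 1"
    and "n = (\<Sum>l = 1..d. \<alpha> l)"
    and "p \<ge> 1"
    and "bounded_seq x"
  shows "norm_inf_p_n p n x powr p
           \<le> (\<Sum>l = 1..d. (real (\<alpha> l) / real n) * norm_inf_p_n p (\<alpha> l) x powr p)"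
proof (rule norm_inf_p_n_powr_le)
  show p0: "p > 0" using assms(4) by simp
  have "\<alpha> 1 \<le> n" unfolding assms(3) using assms(1) by (intro member_le_sum) auto
  moreover have "\<alpha> 1 \<ge> 1" using assms(1,2) by simp
  ultimately have n1: "n \<ge> 1" by linarith
  fix j :: nat assume j: "j \<ge> 1"
  have "real n * window_mean p n x j
      \<le> (\<Sum>l = 1..d. real (\<alpha> l) * norm_inf_p_n p (\<alpha> l) x powr p)"
    unfolding window_mean_concat_blocks[OF assms(2,3) n1]
    using assms(2,5) p0 j
    by (intro sum_mono mult_left_mono window_mean_le_norm_inf_p_n_powr) auto
  then show "window_mean p n x j
      \<le> (\<Sum>l = 1..d. (real (\<alpha> l) / real n) * norm_inf_p_n p (\<alpha> l) x powr p)"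
    using n1 by (simp add: sum_divide_distrib[symmetric] pos_le_divide_eq mult.commute)
qed

end
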